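(* For every integer $n\ge2$, $$\mathrm{ODP}(\mathrm{Tour}_n,\mathrm{Cycle}_n)=n\,x\,\mathrm{ODP}(\mathrm{Tour}_{n-1},\mathrm{Path}_{n-1}).$$
   Context: $\mathrm{Tour}_n$ is the directed graph on $[n]$ with edges $i\to j$ for all $n\ge i>j\ge1$. $\mathrm{Path}_n$ is the directed graph on $[n]$ with edges $i\to i+1$ for $1\le i\le n-1$. For $n\ge2$, $\mathrm{Cycle}_n$ is the directed multigraph on $[n]$ with edges $i\to i+1$ ($1\le i\le n-1$) and $n\to1$; for $n=2$ its edges are $1\to2$ and $2\to1$. For directed graphs $X,Y$ with $|V(X)|=|V(Y)|$, $\mathrm{DFS}(X,Y)$ has as vertices the bijections $\sigma:V(X)\to V(Y)$. For each $\sigma$ and ordered pair $(a,b)$ of distinct vertices, it has $m_X(a,b)m_Y(\sigma(a),\sigma(b))$ edges from $\sigma$ to $\sigma\circ(a\,b)$, where $m_X(a,b)$ is the number of edges $a\to b$ in $X$. Thus $\mathrm{outdeg}(\sigma)=\sum_{a\ne b}m_X(a,b)m_Y(\sigma(a),\sigma(b))$ and $\mathrm{ODP}(X,Y)=\sum_\sigma x^{\mathrm{outdeg}(\sigma)}$. *)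

theory Defs
  imports "HOL-Computational_Algebra.Polynomial" "HOL-Combinatorics.Permutations"
begin

text \<open>A directed multigraph on vertex set [n] = {1..n} is given by its edge
  multiplicity function m a b = number of edges a -> b.\<close>

definition tour :: "nat \<Rightarrow> nat \<Rightarrow> nat \<Rightarrow> nat" where
  "tour n i j = (if n \<ge> i \<and> i > j \<and> j \<ge> 1 then 1 else 0)"

definition path :: "nat \<Rightarrow> nat \<Rightarrow> nat \<Rightarrow> nat" where
  "path n i j = (if 1 \<le> i \<and> i + 1 \<le> n \<and> j = i + 1 then 1 else 0)"

definition cycle :: "nat \<Rightarrow> nat \<Rightarrow> nat \<Rightarrow> nat" where
  "cycle n i j = (if 1 \<le> i \<and> i + 1 \<le> n \<and> j = i + 1 then 1 else 0)
                 + (if i = n \<and> j = 1 then 1 else 0)"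

text \<open>Bijections [n] -> [n] are represented as permutations of {1..n}
  (identity outside). Out-degree of sigma in DFS(X,Y).\<close>

definition outdeg :: "nat \<Rightarrow> (nat \<Rightarrow> nat \<Rightarrow> nat) \<Rightarrow> (nat \<Rightarrow> nat \<Rightarrow> nat) \<Rightarrow> (nat \<Rightarrow> nat) \<Rightarrow> nat" where
  "outdeg n X Y \<sigma> = (\<Sum>a\<in>{1..n}. \<Sum>b\<in>{1..n} - {a}. X a b * Y (\<sigma> a) (\<sigma> b))"

definition ODP :: "nat \<Rightarrow> (nat \<Rightarrow> nat \<Rightarrow> nat) \<Rightarrow> (nat \<Rightarrow> nat \<Rightarrow> nat) \<Rightarrow> int poly" where
  "ODP n X Y = (\<Sum>\<sigma>\<in>{\<sigma>. \<sigma> permutes {1..n}}. monom 1 (outdeg n X Y \<sigma>))"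

end

theory Submission
  imports Defs
begin

text \<open>Write \<open>\<tau> = \<sigma>\<inverse>\<close>. The Tour-edge \<open>a \<rightarrow> b\<close> (\<open>a > b\<close>) meets a \<open>Y\<close>-edge \<open>u \<rightarrow> v\<close>
  with \<open>u = \<sigma> a\<close>, \<open>v = \<sigma> b\<close> exactly when \<open>\<tau> v < \<tau> u\<close>, so \<open>outdeg \<sigma>\<close> counts the \<open>Y\<close>-edges
  along which \<open>\<tau>\<close> decreases: the cyclic descents of \<open>\<tau>\<close> for \<open>Y = Cycle\<^sub>n\<close> and its ordinary
  descents for \<open>Y = Path\<^sub>m\<close>. Cyclic descents are invariant under rotating the positions,
  so the \<open>n\<close> classes of \<open>\<tau>\<close> according to the position of the value \<open>n\<close> contribute equally.
  If \<open>\<tau> n = n\<close>, the step \<open>n \<rightarrow> 1\<close> is always a descent and the step \<open>n - 1 \<rightarrow> n\<close> never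
  is, which leaves the descents of \<open>\<tau>\<close> restricted to \<open>{1..n-1}\<close>, plus one.\<close>

lemma permutes_funpow: "f permutes S \<Longrightarrow> (f ^^ k) permutes S"
  by (induction k) (simp_all add: permutes_compose)

lemma permutes_insert_fixing:
  assumes "a \<notin> S"
  shows "{\<sigma>. \<sigma> permutes insert a S \<and> \<sigma> a = a} = {\<sigma>. \<sigma> permutes S}"
  using assms by (auto intro: permutes_superset permutes_subset permutes_not_in)

lemma sum_permutations_by_preimage:
  assumes "finite S" "b \<in> S"
  shows "(\<Sum>\<tau> | \<tau> permutes S. f \<tau>) = (\<Sum>k\<in>S. \<Sum>\<tau> | \<tau> permutes S \<and> \<tau> k = b. f \<tau>)"
proof -
  have "(\<Sum>\<tau> | \<tau> permutes S. f \<tau>) = (\<Sum>k\<in>S. \<Sum>\<tau> | \<tau> \<in> {\<tau>. \<tau> permutes S} \<and> inv \<tau> b = k. f \<tau>)"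
    using assms by (intro sum.group[symmetric] finite_permutations) (auto simp: permutes_inv permutes_in_image)
  also have "\<dots> = (\<Sum>k\<in>S. \<Sum>\<tau> | \<tau> permutes S \<and> \<tau> k = b. f \<tau>)"
    by (intro sum.cong refl arg_cong[where f = "\<lambda>T. sum f T"]) (auto simp: permutes_inv_eq permutes_inverses)
  finally show ?thesis .
qed

lemma sum_permutations_fibre_compose_right:
  assumes "\<rho> permutes S"
  shows "(\<Sum>\<sigma> | \<sigma> permutes S \<and> \<sigma> a = b. g \<sigma>) = (\<Sum>\<tau> | \<tau> permutes S \<and> \<tau> (\<rho> a) = b. g (\<tau> \<circ> \<rho>))"
proof (rule sum.reindex_bij_betw[symmetric], rule bij_betw_byWitness[where f' = "\<lambda>\<sigma>. \<sigma> \<circ> inv \<rho>"])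
  show "\<forall>\<tau> \<in> {\<tau>. \<tau> permutes S \<and> \<tau> (\<rho> a) = b}. \<tau> \<circ> \<rho> \<circ> inv \<rho> = \<tau>"
    by (simp add: o_assoc[symmetric] permutes_inv_o[OF assms])
  show "\<forall>\<sigma> \<in> {\<sigma>. \<sigma> permutes S \<and> \<sigma> a = b}. \<sigma> \<circ> inv \<rho> \<circ> \<rho> = \<sigma>"
    by (simp add: o_assoc[symmetric] permutes_inv_o[OF assms])
  show "(\<lambda>\<tau>. \<tau> \<circ> \<rho>) ` {\<tau>. \<tau> permutes S \<and> \<tau> (\<rho> a) = b} \<subseteq> {\<sigma>. \<sigma> permutes S \<and> \<sigma> a = b}"
    using assms by (auto intro: permutes_compose)
  show "(\<lambda>\<sigma>. \<sigma> \<circ> inv \<rho>) ` {\<sigma>. \<sigma> permutes S \<and> \<sigma> a = b} \<subseteq> {\<tau>. \<tau> permutes S \<and> \<tau> (\<rho> a) = b}"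
    using assms by (auto intro: permutes_compose permutes_inv simp: permutes_inverses)
qed

lemma sum_of_bool_mult_single:
  assumes "finite A" "\<And>v. v \<in> A \<Longrightarrow> Y v = of_bool (v = w)"
  shows "(\<Sum>v\<in>A. of_bool (P v) * Y v) = (of_bool (w \<in> A \<and> P w) :: nat)"
proof -
  have "(\<Sum>v\<in>A. of_bool (P v) * Y v) = (\<Sum>v\<in>A. if v = w then of_bool (P w) else 0)"
    using assms(2) by (intro sum.cong) auto
  then show ?thesis
    using assms(1) by simp
qed

lemma outdeg_tour:
  assumes "\<sigma> permutes {1..n}"
  shows "outdeg n (tour n) Y \<sigma> =
    (\<Sum>u\<in>{1..n}. \<Sum>v\<in>{1..n} - {u}. of_bool (inv \<sigma> v < inv \<sigma> u) * Y u v)"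
proof -
  have inv: "inv \<sigma> permutes {1..n}"
    using assms by (rule permutes_inv)
  have bij: "bij_betw (inv \<sigma>) ({1..n} - {u}) ({1..n} - {inv \<sigma> u})" if "u \<in> {1..n}" for u
    using permutes_imp_bij[OF inv] by (rule bij_betw_DiffI) (use that permutes_in_image[OF inv] in auto)
  have "outdeg n (tour n) Y \<sigma> =
      (\<Sum>u\<in>{1..n}. \<Sum>b\<in>{1..n} - {inv \<sigma> u}. tour n (inv \<sigma> u) b * Y u (\<sigma> b))"
    unfolding outdeg_def
    by (subst sum.reindex_bij_betw[OF permutes_imp_bij[OF inv], symmetric])
       (simp add: permutes_inverses[OF assms])
  also have "\<dots> = (\<Sum>u\<in>{1..n}. \<Sum>v\<in>{1..n} - {u}. tour n (inv \<sigma> u) (inv \<sigma> v) * Y u v)"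
  proof (rule sum.cong[OF refl])
    fix u assume "u \<in> {1..n}"
    then show "(\<Sum>b\<in>{1..n} - {inv \<sigma> u}. tour n (inv \<sigma> u) b * Y u (\<sigma> b)) =
        (\<Sum>v\<in>{1..n} - {u}. tour n (inv \<sigma> u) (inv \<sigma> v) * Y u v)"
      by (subst sum.reindex_bij_betw[OF bij, symmetric]) (simp_all add: permutes_inverses[OF assms])
  qed
  also have "\<dots> = (\<Sum>u\<in>{1..n}. \<Sum>v\<in>{1..n} - {u}. of_bool (inv \<sigma> v < inv \<sigma> u) * Y u v)"
    using permutes_in_image[OF inv] by (intro sum.cong refl) (auto simp: tour_def)
  finally show ?thesis .
qed

definition cyc_succ :: "nat \<Rightarrow> nat \<Rightarrow> nat" where
  "cyc_succ n u = (if u \<in> {1..n} then u mod n + 1 else u)"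

definition cyclic_descents :: "nat \<Rightarrow> (nat \<Rightarrow> nat) \<Rightarrow> nat" where
  "cyclic_descents n \<tau> = card {u \<in> {1..n}. \<tau> (cyc_succ n u) < \<tau> u}"

definition descents :: "nat \<Rightarrow> (nat \<Rightarrow> nat) \<Rightarrow> nat" where
  "descents m \<tau> = card {u \<in> {1..<m}. \<tau> (Suc u) < \<tau> u}"

lemma cyc_succ_in: "u \<in> {1..n} \<Longrightarrow> cyc_succ n u \<in> {1..n}"
  by (auto simp: cyc_succ_def Suc_leI)

lemma cyc_succ_neq: "n \<ge> 2 \<Longrightarrow> u \<in> {1..n} \<Longrightarrow> cyc_succ n u \<noteq> u"
  by (cases "u = n") (auto simp: cyc_succ_def)

lemma cyc_succ_permutes: "cyc_succ n permutes {1..n}"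
proof (rule inj_imp_permutes)
  show "inj_on (cyc_succ n) {1..n}"
  proof (rule inj_onI)
    fix u v assume "u \<in> {1..n}" "v \<in> {1..n}" "cyc_succ n u = cyc_succ n v"
    then show "u = v"
      by (cases "u = n"; cases "v = n") (auto simp: cyc_succ_def)
  qed
qed (auto simp: cyc_succ_def Suc_leI)

lemma cyc_succ_funpow_last: "k \<in> {1..n} \<Longrightarrow> (cyc_succ n ^^ k) n = k"
proof (induction k)
  case (Suc k)
  show ?case
  proof (cases "k = 0")
    case True
    with Suc.prems show ?thesis by (simp add: cyc_succ_def)
  next
    case False
    with Suc show ?thesis by (simp add: cyc_succ_def)
  qed
qed simp

lemma cycle_eq_cyc_succ:
  "n \<ge> 2 \<Longrightarrow> u \<in> {1..n} \<Longrightarrow> cycle n u v = of_bool (v = cyc_succ n u)"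
  by (cases "u = n") (auto simp: cycle_def cyc_succ_def)

lemma outdeg_tour_cycle:
  assumes "\<sigma> permutes {1..n}" "n \<ge> 2"
  shows "outdeg n (tour n) (cycle n) \<sigma> = cyclic_descents n (inv \<sigma>)"
proof -
  have "(\<Sum>v\<in>{1..n} - {u}. of_bool (inv \<sigma> v < inv \<sigma> u) * cycle n u v)
      = of_bool (inv \<sigma> (cyc_succ n u) < inv \<sigma> u)" if "u \<in> {1..n}" for u
    using that assms(2) cyc_succ_in cyc_succ_neq
    by (subst sum_of_bool_mult_single) (auto simp: cycle_eq_cyc_succ)
  then have "outdeg n (tour n) (cycle n) \<sigma> = (\<Sum>u\<in>{1..n}. of_bool (inv \<sigma> (cyc_succ n u) < inv \<sigma> u))"
    unfolding outdeg_tour[OF assms(1)] by (rule sum.cong[OF refl])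
  then show ?thesis
    by (simp add: cyclic_descents_def Int_def)
qed

lemma outdeg_tour_path:
  assumes "\<sigma> permutes {1..m}"
  shows "outdeg m (tour m) (path m) \<sigma> = descents m (inv \<sigma>)"
proof -
  have "(\<Sum>v\<in>{1..m} - {u}. of_bool (inv \<sigma> v < inv \<sigma> u) * path m u v)
      = of_bool (u < m \<and> inv \<sigma> (Suc u) < inv \<sigma> u)" if "u \<in> {1..m}" for u
    using that by (subst sum_of_bool_mult_single[where w = "Suc u"]) (auto simp: path_def)
  then have "outdeg m (tour m) (path m) \<sigma> = (\<Sum>u\<in>{1..m}. of_bool (u < m \<and> inv \<sigma> (Suc u) < inv \<sigma> u))"
    unfolding outdeg_tour[OF assms(1)] by (rule sum.cong[OF refl])
  also have "\<dots> = card {u \<in> {1..m}. u < m \<and> inv \<sigma> (Suc u) < inv \<sigma> u}"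
    by (simp add: Int_def)
  also have "{u \<in> {1..m}. u < m \<and> inv \<sigma> (Suc u) < inv \<sigma> u} = {u \<in> {1..<m}. inv \<sigma> (Suc u) < inv \<sigma> u}"
    by auto
  finally show ?thesis unfolding descents_def .
qed

lemma cyclic_descents_compose_right:
  assumes "\<rho> permutes {1..n}" "\<And>u. \<rho> (cyc_succ n u) = cyc_succ n (\<rho> u)"
  shows "cyclic_descents n (\<tau> \<circ> \<rho>) = cyclic_descents n \<tau>"
proof -
  let ?D = "{w \<in> {1..n}. \<tau> (cyc_succ n w) < \<tau> w}"
  have "cyclic_descents n (\<tau> \<circ> \<rho>) = card {u \<in> {1..n}. \<tau> (\<rho> (cyc_succ n u)) < \<tau> (\<rho> u)}"
    by (simp add: cyclic_descents_def)
  also have "{u \<in> {1..n}. \<tau> (\<rho> (cyc_succ n u)) < \<tau> (\<rho> u)} = \<rho> -` ?D"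
    using permutes_in_image[OF assms(1)] by (auto simp: assms(2))
  also have "card (\<rho> -` ?D) = card ?D"
    using permutes_inj[OF assms(1)] permutes_surj[OF assms(1)] by (intro card_vimage_inj) auto
  finally show ?thesis
    by (simp add: cyclic_descents_def)
qed

lemma cyclic_descents_compose_rotation:
  "cyclic_descents n (\<tau> \<circ> (cyc_succ n ^^ k)) = cyclic_descents n \<tau>"
  by (rule cyclic_descents_compose_right[OF permutes_funpow[OF cyc_succ_permutes]])
     (simp add: funpow_swap1)

lemma cyclic_descents_fix_last:
  assumes "n \<ge> 2" "\<tau> permutes {1..n}" "\<tau> n = n"
  shows "cyclic_descents n \<tau> = Suc (descents (n - 1) \<tau>)"
proof -
  have "\<tau> 1 \<in> {1..n}" "\<tau> (n - 1) \<in> {1..n}"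
    using assms(1) permutes_in_image[OF assms(2)] by auto
  moreover have "\<tau> 1 \<noteq> \<tau> n"
    using assms(1) by (simp add: inj_eq[OF permutes_inj[OF assms(2)]])
  ultimately have wrap: "\<tau> 1 < \<tau> n" and no_descent_before_n: "\<not> \<tau> n < \<tau> (n - 1)"
    using assms(3) by auto
  have "u \<in> {1..n} \<and> \<tau> (cyc_succ n u) < \<tau> u \<longleftrightarrow> u = n \<or> u \<in> {1..<n - 1} \<and> \<tau> (Suc u) < \<tau> u"
    for u
  proof -
    consider "u = n" | "Suc u = n" | "u \<noteq> n" "Suc u \<noteq> n"
      by blast
    then show ?thesis
    proof cases
      case 1
      with assms(1) wrap show ?thesis by (simp add: cyc_succ_def)
    next
      case 2
      with assms(1) no_descent_before_n show ?thesis by (auto simp: cyc_succ_def)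
    next
      case 3
      then show ?thesis by (auto simp: cyc_succ_def)
    qed
  qed
  then have "{u \<in> {1..n}. \<tau> (cyc_succ n u) < \<tau> u} = insert n {u \<in> {1..<n - 1}. \<tau> (Suc u) < \<tau> u}"
    by blast
  then have "cyclic_descents n \<tau> = card (insert n {u \<in> {1..<n - 1}. \<tau> (Suc u) < \<tau> u})"
    unfolding cyclic_descents_def by (rule arg_cong)
  also have "\<dots> = Suc (descents (n - 1) \<tau>)"
    unfolding descents_def by (rule card_insert_disjoint) auto
  finally show ?thesis .
qed

lemma sum_permutations_rotation_invariant:
  fixes f :: "(nat \<Rightarrow> nat) \<Rightarrow> 'a::semiring_1"
  assumes "n \<ge> 1" "\<And>\<tau> k. f (\<tau> \<circ> (cyc_succ n ^^ k)) = f \<tau>"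
  shows "(\<Sum>\<tau> | \<tau> permutes {1..n}. f \<tau>) = of_nat n * (\<Sum>\<tau> | \<tau> permutes {1..n} \<and> \<tau> n = n. f \<tau>)"
proof -
  have "(\<Sum>\<tau> | \<tau> permutes {1..n}. f \<tau>) = (\<Sum>k\<in>{1..n}. \<Sum>\<tau> | \<tau> permutes {1..n} \<and> \<tau> k = n. f \<tau>)"
    using assms(1) by (intro sum_permutations_by_preimage) auto
  also have "\<dots> = (\<Sum>k\<in>{1..n}. \<Sum>\<tau> | \<tau> permutes {1..n} \<and> \<tau> n = n. f \<tau>)"
  proof (rule sum.cong[OF refl])
    fix k assume k: "k \<in> {1..n}"
    \<comment> \<open>the \<open>k\<close>-th rotation maps \<open>n\<close> to \<open>k\<close>, so composing with it moves the fibre \<open>\<tau> k = n\<close> onto \<open>\<tau> n = n\<close>\<close>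
    show "(\<Sum>\<tau> | \<tau> permutes {1..n} \<and> \<tau> k = n. f \<tau>) = (\<Sum>\<tau> | \<tau> permutes {1..n} \<and> \<tau> n = n. f \<tau>)"
      using sum_permutations_fibre_compose_right[OF permutes_funpow[OF cyc_succ_permutes[of n], of k],
          where a = n and b = n and g = f]
      by (simp add: cyc_succ_funpow_last[OF k] assms(2))
  qed
  also have "\<dots> = of_nat n * (\<Sum>\<tau> | \<tau> permutes {1..n} \<and> \<tau> n = n. f \<tau>)"
    by simp
  finally show ?thesis .
qed

theorem mainTheorem13:
  fixes n :: nat
  assumes "n \<ge> 2"
  shows "ODP n (tour n) (cycle n)
         = smult (of_nat n) [:0, 1:] * ODP (n - 1) (tour (n - 1)) (path (n - 1))"
proof -
  have fixing_n: "{\<tau>. \<tau> permutes {1..n} \<and> \<tau> n = n} = {\<tau>. \<tau> permutes {1..n - 1}}"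
  proof -
    have "insert n {1..n - 1} = {1..n}"
      using assms by auto
    then show ?thesis
      using permutes_insert_fixing[of n "{1..n - 1}"] assms by simp
  qed
  have "ODP n (tour n) (cycle n) = (\<Sum>\<sigma> | \<sigma> permutes {1..n}. monom 1 (cyclic_descents n (inv \<sigma>)))"
    unfolding ODP_def using assms by (intro sum.cong) (auto simp: outdeg_tour_cycle)
  also have "\<dots> = (\<Sum>\<tau> | \<tau> permutes {1..n}. monom 1 (cyclic_descents n \<tau>))"
    by (rule sum_permutations_inverse[symmetric])
  also have "\<dots> = of_nat n * (\<Sum>\<tau> | \<tau> permutes {1..n} \<and> \<tau> n = n. monom 1 (cyclic_descents n \<tau>))"
    using assms by (intro sum_permutations_rotation_invariant) (simp_all add: cyclic_descents_compose_rotation)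
  also have "(\<Sum>\<tau> | \<tau> permutes {1..n} \<and> \<tau> n = n. monom (1::int) (cyclic_descents n \<tau>))
      = (\<Sum>\<tau> | \<tau> permutes {1..n - 1}. [:0, 1:] * monom 1 (descents (n - 1) \<tau>))"
    unfolding fixing_n[symmetric] using assms
    by (intro sum.cong) (simp_all add: cyclic_descents_fix_last monom_Suc)
  also have "\<dots> = [:0, 1:] * ODP (n - 1) (tour (n - 1)) (path (n - 1))"
    unfolding ODP_def sum_distrib_left
    by (subst sum_permutations_inverse) (auto intro!: sum.cong simp: outdeg_tour_path)
  finally show ?thesis
    by (simp add: of_nat_mult_conv_smult)
qed

end
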